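(* Let $G$ be a connected chordal graph. Suppose $G$ contains two induced diamonds $D_1$ and $D_2$, where $D_j$ has tips $t_j,t_j'$, set of tips $T_j$, centers $c_j,c_j'$ and set of centers $C_j=\{c_j,c_j'\}$, such that: (i) $C_1\cap C_2=\emptyset$; (ii) if no vertex of $C_1$ is adjacent to a vertex of $C_2$, then every minimal $C_1,C_2$-separator in $G$ has size one; (iii) for each $j\in\{1,2\}$, the tips $t_j$ and $t_j'$ belong to different connected components of $G-C_j$; (iv) for each $j\in\{1,2\}$, every connected component of $G-C_j$ contains a vertex adjacent to both vertices of $C_j$. Then $G$ has an induced subgraph isomorphic to $F_1$, $F_2$, or $H_i$ for some $i\ge 1$.
   Context: A graph is chordal if it has no induced cycle of length at least $4$. A diamond is the graph obtained from $K_4$ by deleting one edge; its two vertices of degree $2$ are its tips and its two vertices of degree $3$ are its centers. For disjoint vertex sets $A,B$ with no edge between $A$ and $B$, an $A,B$-separator is a set $S\subseteq V(G)\setminus(A\cup B)$ such that $A$ and $B$ lie in different components of $G-S$ (here meaning no component of $G-S$ meets both $A$ and $B$); it is minimal if it contains no other $A,B$-separator. $F_1$ is the square of the $6$-vertex path: vertices $p_1,\dots,p_6$ with $p_ip_j$ an edge iff $1\le|i-j|\le 2$. $F_2$ is obtained from $K_4$ on $\{a,b,c,d\}$ by adding a vertex adjacent exactly to $a,b$ and a vertex adjacent exactly to $c,d$. For $i\ge 1$, $H_i$ has vertex set $\{x_1,x_2,x_3,y_1,\dots,y_i,z_1,z_2,z_3\}$ and edges: the path $y_1y_2\cdots y_i$;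 $x_1x_2,x_1x_3,x_2x_3,x_2y_1,x_3y_1$ (a diamond with tips $x_1,y_1$); and $z_1z_2,z_1z_3,z_2z_3,z_2y_i,z_3y_i$ (a diamond with tips $z_1,y_i$); no other edges. (So $H_1$ is two diamonds sharing a tip.) *)

theory Defs
  imports Main
begin

definition simple_graph :: "'a set \<Rightarrow> ('a \<Rightarrow> 'a \<Rightarrow> bool) \<Rightarrow> bool" where
  "simple_graph V E \<longleftrightarrow> finite V \<and> (\<forall>u v. E u v \<longrightarrow> E v u)
     \<and> (\<forall>v. \<not> E v v) \<and> (\<forall>u v. E u v \<longrightarrow> u \<in> V \<and> v \<in> V)"

definition reach_in :: "('a \<Rightarrow> 'a \<Rightarrow> bool) \<Rightarrow> 'a set \<Rightarrow> 'a \<Rightarrow> 'a \<Rightarrow> bool" where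
  "reach_in E S u v \<longleftrightarrow> u \<in> S \<and> v \<in> S \<and> (\<lambda>x y. x \<in> S \<and> y \<in> S \<and> E x y)\<^sup>*\<^sup>* u v"

definition connected_graph :: "'a set \<Rightarrow> ('a \<Rightarrow> 'a \<Rightarrow> bool) \<Rightarrow> bool" where
  "connected_graph V E \<longleftrightarrow> V \<noteq> {} \<and> (\<forall>u\<in>V. \<forall>v\<in>V. reach_in E V u v)"

definition induced_cycle :: "'a set \<Rightarrow> ('a \<Rightarrow> 'a \<Rightarrow> bool) \<Rightarrow> 'a list \<Rightarrow> bool" where
  "induced_cycle V E vs \<longleftrightarrow> distinct vs \<and> set vs \<subseteq> V \<and> length vs \<ge> 3 \<and>
     (\<forall>i<length vs. \<forall>j<length vs.
        E (vs ! i) (vs ! j) \<longleftrightarrow> (j = Suc i mod length vs \<or> i = Suc j mod length vs))"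

definition chordal :: "'a set \<Rightarrow> ('a \<Rightarrow> 'a \<Rightarrow> bool) \<Rightarrow> bool" where
  "chordal V E \<longleftrightarrow> (\<nexists>vs. induced_cycle V E vs \<and> length vs \<ge> 4)"

definition induced_diamond :: "'a set \<Rightarrow> ('a \<Rightarrow> 'a \<Rightarrow> bool) \<Rightarrow> 'a \<Rightarrow> 'a \<Rightarrow> 'a \<Rightarrow> 'a \<Rightarrow> bool" where
  "induced_diamond V E t t' c c' \<longleftrightarrow> {t, t', c, c'} \<subseteq> V \<and> distinct [t, t', c, c'] \<and>
     E c c' \<and> E t c \<and> E t c' \<and> E t' c \<and> E t' c' \<and> \<not> E t t'"

definition separator :: "'a set \<Rightarrow> ('a \<Rightarrow> 'a \<Rightarrow> bool) \<Rightarrow> 'a set \<Rightarrow> 'a set \<Rightarrow> 'a set \<Rightarrow> bool" where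
  "separator V E A B S \<longleftrightarrow> S \<subseteq> V - (A \<union> B) \<and>
     (\<forall>a\<in>A. \<forall>b\<in>B. \<not> reach_in E (V - S) a b)"

definition minimal_separator :: "'a set \<Rightarrow> ('a \<Rightarrow> 'a \<Rightarrow> bool) \<Rightarrow> 'a set \<Rightarrow> 'a set \<Rightarrow> 'a set \<Rightarrow> bool" where
  "minimal_separator V E A B S \<longleftrightarrow> separator V E A B S \<and>
     (\<forall>S'. S' \<subset> S \<longrightarrow> \<not> separator V E A B S')"

definition has_induced :: "'a set \<Rightarrow> ('a \<Rightarrow> 'a \<Rightarrow> bool) \<Rightarrow> 'b set \<Rightarrow> ('b \<Rightarrow> 'b \<Rightarrow> bool) \<Rightarrow> bool" where
  "has_induced V E VH EH \<longleftrightarrow> (\<exists>f. inj_on f VH \<and> f ` VH \<subseteq> V \<and>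
     (\<forall>u\<in>VH. \<forall>v\<in>VH. E (f u) (f v) \<longleftrightarrow> EH u v))"

text \<open>F1: square of the path p1..p6 (vertices 1..6).\<close>
definition F1_V :: "nat set" where "F1_V = {1..6}"
definition F1_E :: "nat \<Rightarrow> nat \<Rightarrow> bool" where
  "F1_E i j \<longleftrightarrow> i \<in> F1_V \<and> j \<in> F1_V \<and> i \<noteq> j \<and> (i \<le> j + 2 \<and> j \<le> i + 2)"

text \<open>F2: K4 on a=0,b=1,c=2,d=3, plus 4 adjacent to 0,1 and 5 adjacent to 2,3.\<close>
definition F2_V :: "nat set" where "F2_V = {0..5}"
definition F2_E0 :: "nat \<Rightarrow> nat \<Rightarrow> bool" where
  "F2_E0 u v \<longleftrightarrow> (u < 4 \<and> v < 4 \<and> u \<noteq> v) \<or> (u = 4 \<and> v \<in> {0,1}) \<or> (u = 5 \<and> v \<in> {2,3})"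
definition F2_E :: "nat \<Rightarrow> nat \<Rightarrow> bool" where
  "F2_E u v \<longleftrightarrow> F2_E0 u v \<or> F2_E0 v u"

text \<open>H_i: x1,x2,x3 = 0,1,2; z1,z2,z3 = 3,4,5; y_k = 5 + k for k = 1..i.\<close>
definition H_V :: "nat \<Rightarrow> nat set" where "H_V i = {0..5 + i}"
definition H_E0 :: "nat \<Rightarrow> nat \<Rightarrow> nat \<Rightarrow> bool" where
  "H_E0 i u v \<longleftrightarrow>
     (6 \<le> u \<and> v = u + 1 \<and> v \<le> 5 + i) \<comment> \<open>path y_1 ... y_i\<close>
     \<or> (u, v) \<in> {(0,1), (0,2), (1,2), (1,6), (2,6)} \<comment> \<open>diamond with tips x1, y1\<close>
     \<or> (u, v) \<in> {(3,4), (3,5), (4,5), (4,5+i), (5,5+i)} \<comment> \<open>diamond with tips z1, y_i\<close>"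
definition H_E :: "nat \<Rightarrow> nat \<Rightarrow> nat \<Rightarrow> bool" where
  "H_E i u v \<longleftrightarrow> H_E0 i u v \<or> H_E0 i v u"

end

theory Submission
  imports Defs
begin

text \<open>Conditions (iii) and (iv) give a vertex \<open>z\<close> adjacent to both centres of \<open>D\<^sub>2\<close> that
  \<open>C\<^sub>2\<close> separates from \<open>C\<^sub>1\<close>, and a vertex \<open>x\<close> adjacent to both centres of \<open>D\<^sub>1\<close> that
  \<open>C\<^sub>1\<close> separates from \<open>z\<close>. Every shortest \<open>x\<close>--\<open>z\<close> path then passes through the edge
  \<open>C\<^sub>1\<close>, and chordality turns this into a fork near \<open>C\<^sub>1\<close>: a vertex \<open>a\<close> with two distinct
  neighbours one step closer to \<open>z\<close>. Repeating the argument at \<open>C\<^sub>2\<close>, now towards \<open>a\<close>,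
  gives a vertex \<open>t\<close> with \<open>d(a, t) \<ge> 3\<close> and forks at both ends of the \<open>a\<close>--\<open>t\<close> geodesics.

  In a chordal graph the vertices on these geodesics at distance \<open>k\<close> from \<open>a\<close> form a clique
  \<open>L\<^sub>k\<close>, the neighbourhoods in \<open>L\<^sub>k\<^sub>+\<^sub>1\<close> of the vertices of \<open>L\<^sub>k\<close> are nested, and
  \<open>L\<^sub>1\<close> and \<open>L\<^sub>D\<^sub>-\<^sub>1\<close> have at least two vertices. The first layer \<open>L\<^sub>q\<close> with
  \<open>q \<ge> 2\<close> and two vertices yields \<open>F\<^sub>1\<close> or \<open>F\<^sub>2\<close> if \<open>q = 2\<close>, and \<open>H\<^sub>q\<^sub>-\<^sub>2\<close>
  otherwise.\<close>

section \<open>Walks and distances\<close>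

definition walk :: "('a \<Rightarrow> 'a \<Rightarrow> bool) \<Rightarrow> (nat \<Rightarrow> 'a) \<Rightarrow> nat \<Rightarrow> bool" where
  "walk E f n \<longleftrightarrow> (\<forall>i<n. E (f i) (f (Suc i)))"

definition graph_dist :: "('a \<Rightarrow> 'a \<Rightarrow> bool) \<Rightarrow> 'a \<Rightarrow> 'a \<Rightarrow> nat" where
  "graph_dist E u v = (LEAST n. \<exists>f. walk E f n \<and> f 0 = u \<and> f n = v)"

lemma walk_append:
  assumes "walk E f m" "walk E g n" "f m = g 0"
  shows "walk E (\<lambda>i. if i \<le> m then f i else g (i - m)) (m + n)"
  unfolding walk_def
proof (intro allI impI)
  fix i assume i: "i < m + n"
  consider "Suc i \<le> m" | "i = m" | "m < i" by linarith
  then show "E (if i \<le> m then f i else g (i - m)) (if Suc i \<le> m then f (Suc i) else g (Suc i - m))"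
  proof cases
    case 3
    then have "Suc i - m = Suc (i - m)" by simp
    with 3 i assms(2) show ?thesis unfolding walk_def by auto
  qed (use assms i in \<open>auto simp: walk_def\<close>)
qed

lemma walk_prefix: "walk E f n \<Longrightarrow> k \<le> n \<Longrightarrow> walk E f k"
  unfolding walk_def by auto

lemma walk_suffix: "walk E f n \<Longrightarrow> k \<le> n \<Longrightarrow> walk E (\<lambda>i. f (k + i)) (n - k)"
  unfolding walk_def by auto

lemma walk_2: "E p x \<Longrightarrow> E x q \<Longrightarrow> walk E (\<lambda>i. if i = 0 then p else if i = 1 then x else q) 2"
  unfolding walk_def by (auto simp: less_2_cases_iff)

lemma reach_in_refl: "u \<in> S \<Longrightarrow> reach_in E S u u"
  unfolding reach_in_def by auto

lemma reach_in_trans: "reach_in E S u v \<Longrightarrow> reach_in E S v w \<Longrightarrow> reach_in E S u w"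
  unfolding reach_in_def by auto

lemma reach_in_adj: "u \<in> S \<Longrightarrow> v \<in> S \<Longrightarrow> E u v \<Longrightarrow> reach_in E S u v"
  unfolding reach_in_def by auto

locale connected_simple_graph =
  fixes V :: "'a set" and E :: "'a \<Rightarrow> 'a \<Rightarrow> bool"
  assumes simple: "simple_graph V E"
    and connected: "connected_graph V E"
begin

abbreviation d where "d \<equiv> graph_dist E"

lemma adj_sym: "E u v \<Longrightarrow> E v u"
  using simple unfolding simple_graph_def by blast

lemma adj_irrefl: "\<not> E u u"
  using simple unfolding simple_graph_def by blast

lemma adj_in_V: "E u v \<Longrightarrow> u \<in> V \<and> v \<in> V"
  using simple unfolding simple_graph_def by blast

lemma finite_V: "finite V"
  using simple unfolding simple_graph_def by blast

lemma walk_reverse: "walk E f n \<Longrightarrow> walk E (\<lambda>i. f (n - i)) n"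
  unfolding walk_def
proof (intro allI impI)
  fix i assume "\<forall>i<n. E (f i) (f (Suc i))" "i < n"
  then have "E (f (n - Suc i)) (f (Suc (n - Suc i)))" by simp
  moreover have "Suc (n - Suc i) = n - i" using \<open>i < n\<close> by simp
  ultimately show "E (f (n - i)) (f (n - Suc i))" using adj_sym by simp
qed

lemma walk_in_V:
  assumes "walk E f n" "0 < n" "i \<le> n"
  shows "f i \<in> V"
proof (cases "i < n")
  case True
  then show ?thesis using assms(1) adj_in_V unfolding walk_def by blast
next
  case False
  then have "i = Suc (n - 1)" using assms(2,3) by simp
  moreover have "n - 1 < n" using assms(2) by simp
  then have "E (f (n - 1)) (f (Suc (n - 1)))" using assms(1) unfolding walk_def by blast
  ultimately show ?thesis using adj_in_V by simp
qed

lemma reach_in_walk: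
  assumes "reach_in E S u v"
  shows "\<exists>f n. walk E f n \<and> f 0 = u \<and> f n = v \<and> (\<forall>i\<le>n. f i \<in> S)"
proof -
  have "(\<lambda>x y. x \<in> S \<and> y \<in> S \<and> E x y)\<^sup>*\<^sup>* u v" and "u \<in> S"
    using assms unfolding reach_in_def by auto
  then show ?thesis
  proof (induction rule: rtranclp_induct)
    case base
    show ?case using base by (intro exI[of _ "\<lambda>_. u"] exI[of _ 0]) (auto simp: walk_def)
  next
    case (step y z)
    then obtain f n where f: "walk E f n" "f 0 = u" "f n = y" "\<forall>i\<le>n. f i \<in> S" by blast
    let ?g = "\<lambda>i. if i \<le> n then f i else z"
    have "walk E ?g (Suc n)" using f step(2) unfolding walk_def by (auto simp: less_Suc_eq)
    with f step(2) show ?case by (intro exI[of _ ?g] exI[of _ "Suc n"]) auto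
  qed
qed

lemma walk_reach_in:
  assumes "walk E f n" "\<forall>i\<le>n. f i \<in> S"
  shows "reach_in E S (f 0) (f n)"
proof -
  have "(\<lambda>x y. x \<in> S \<and> y \<in> S \<and> E x y)\<^sup>*\<^sup>* (f 0) (f k)" if "k \<le> n" for k
    using that
  proof (induction k)
    case (Suc k)
    with assms show ?case unfolding walk_def by (simp add: rtranclp.rtrancl_into_rtrancl)
  qed simp
  with assms(2) show ?thesis unfolding reach_in_def by auto
qed

lemma reach_in_sym:
  assumes "reach_in E S u v"
  shows "reach_in E S v u"
proof -
  obtain f n where "walk E f n" "f 0 = u" "f n = v" "\<forall>i\<le>n. f i \<in> S"
    using reach_in_walk[OF assms] by blast
  then show ?thesis using walk_reach_in[OF walk_reverse, of f n S] by auto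
qed

lemma reach_in_closed_neighbourhood:
  assumes "E c c'" "c \<in> S" "c' \<in> S" "v \<in> S" "v = c \<or> v = c' \<or> E v c \<or> E v c'"
  shows "reach_in E S v c"
proof -
  have c'c: "reach_in E S c' c" using reach_in_adj[of c' S c E] assms(2,3) adj_sym[OF assms(1)] by blast
  from assms(5) show ?thesis
  proof (elim disjE)
    assume "E v c'"
    then have "reach_in E S v c'" using reach_in_adj[of v S c' E] assms(3,4) by blast
    from this c'c show ?thesis by (rule reach_in_trans)
  next
    assume "E v c"
    then show ?thesis using reach_in_adj[of v S c E] assms(2,4) by blast
  qed (use reach_in_refl[OF assms(2)] c'c in auto)
qed

lemma graph_dist_walk:
  assumes "u \<in> V" "v \<in> V"
  shows "\<exists>f. walk E f (d u v) \<and> f 0 = u \<and> f (d u v) = v"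
proof -
  have "\<exists>n f. walk E f n \<and> f 0 = u \<and> f n = v"
    using connected assms reach_in_walk unfolding connected_graph_def by blast
  then show ?thesis unfolding graph_dist_def by (rule LeastI_ex)
qed

lemma graph_dist_le_walk: "walk E f n \<Longrightarrow> d (f 0) (f n) \<le> n"
  unfolding graph_dist_def by (intro Least_le) blast

lemma dist_self: "d u u = 0"
  using graph_dist_le_walk[of "\<lambda>_. u" 0] by (simp add: walk_def)

lemma dist_eq_0:
  assumes "u \<in> V" "v \<in> V" "d u v = 0"
  shows "u = v"
  using graph_dist_walk[OF assms(1,2)] assms(3) by auto

lemma dist_commute:
  assumes "u \<in> V" "v \<in> V"
  shows "d u v = d v u"
proof -
  have "d y x \<le> d x y" if xy: "x \<in> V" "y \<in> V" for x y
  proof -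
    obtain f where "walk E f (d x y)" "f 0 = x" "f (d x y) = y" using graph_dist_walk[OF xy] by blast
    then show ?thesis using graph_dist_le_walk[OF walk_reverse] by fastforce
  qed
  with assms show ?thesis by (simp add: le_antisym)
qed

lemma dist_triangle:
  assumes "u \<in> V" "v \<in> V" "w \<in> V"
  shows "d u w \<le> d u v + d v w"
proof -
  obtain f where f: "walk E f (d u v)" "f 0 = u" "f (d u v) = v" using graph_dist_walk assms by blast
  obtain g where g: "walk E g (d v w)" "g 0 = v" "g (d v w) = w" using graph_dist_walk assms by blast
  from graph_dist_le_walk[OF walk_append[OF f(1) g(1)]] f g show ?thesis
    by (cases "d v w = 0") auto
qed

lemma dist_adj:
  assumes "E u v"
  shows "d u v = 1"
proof -
  have "d u v \<le> 1"
    using graph_dist_le_walk[of "\<lambda>i. if i = 0 then u else v" 1] assms by (simp add: walk_def)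
  moreover have "d u v \<noteq> 0"
    using dist_eq_0[of u v] adj_in_V[OF assms] adj_irrefl assms by blast
  ultimately show ?thesis by simp
qed

lemma dist_le_Suc_adj:
  assumes "E u v" "w \<in> V"
  shows "d u w \<le> Suc (d v w)"
  using dist_triangle[of u v w] dist_adj[OF assms(1)] adj_in_V[OF assms(1)] assms(2) by simp

lemma geodesic_dist:
  assumes "walk E f n" "f 0 = u" "f n = v" "d u v = n" "u \<in> V" "i \<le> n"
  shows "d u (f i) = i \<and> d (f i) v = n - i \<and> f i \<in> V"
proof -
  have fV: "f j \<in> V" if "j \<le> n" for j
    using assms that walk_in_V[OF assms(1)] by (cases "n = 0") auto
  have "d u (f i) \<le> i" using graph_dist_le_walk[OF walk_prefix[OF assms(1,6)]] assms by simp
  moreover have "d (f i) v \<le> n - i" using graph_dist_le_walk[OF walk_suffix[OF assms(1,6)]] assms by simp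
  moreover have "n \<le> d u (f i) + d (f i) v"
    using dist_triangle[OF assms(5) fV[OF assms(6)] fV[of n]] assms by simp
  ultimately show ?thesis using assms(6) fV by (simp add: le_antisym)
qed

lemma geodesic_to:
  assumes "v \<in> V" "t \<in> V"
  shows "\<exists>f. walk E f (d v t) \<and> f 0 = v \<and> f (d v t) = t \<and> (\<forall>i\<le>d v t. d (f i) t = d v t - i \<and> f i \<in> V)"
  using graph_dist_walk[OF assms] geodesic_dist[OF _ _ _ refl assms(1)] by blast

lemma dist_Suc_adj:
  assumes "u \<in> V" "w \<in> V" "d u w = Suc k"
  shows "\<exists>v. E u v \<and> d v w = k"
proof -
  obtain f where f: "walk E f (d u w)" "f 0 = u" "f (d u w) = w" using graph_dist_walk assms by blast
  then have "E u (f 1)" using assms(3) unfolding walk_def by auto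
  moreover have "d (f 1) w = k" using geodesic_dist[OF f refl assms(1), of 1] assms(3) by simp
  ultimately show ?thesis by blast
qed

lemma dist_1_adj:
  assumes "u \<in> V" "v \<in> V" "d u v = 1"
  shows "E u v"
proof -
  obtain w where "E u w" "d w v = 0" using dist_Suc_adj[OF assms(1,2)] assms(3) by auto
  moreover then have "w = v" using dist_eq_0 adj_in_V assms(2) by blast
  ultimately show ?thesis by simp
qed

lemma dist_ge_2:
  assumes "u \<in> V" "v \<in> V" "u \<noteq> v" "\<not> E u v"
  shows "2 \<le> d u v"
proof -
  have "d u v \<noteq> 0" "d u v \<noteq> 1" using dist_eq_0 dist_1_adj assms by blast+
  then show ?thesis by linarith
qed

lemma geodesic_meets_separator:
  assumes "u \<in> V - S" "v \<in> V - S" "\<not> reach_in E (V - S) u v"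
  shows "\<exists>s\<in>S. d u v = d u s + d s v"
proof -
  obtain f where f: "walk E f (d u v)" "f 0 = u" "f (d u v) = v"
    using graph_dist_walk assms by blast
  have "\<not> (\<forall>i\<le>d u v. f i \<in> V - S)"
  proof
    assume "\<forall>i\<le>d u v. f i \<in> V - S"
    from walk_reach_in[OF f(1) this] f(2,3) assms(3) show False by simp
  qed
  then obtain i where i: "i \<le> d u v" "f i \<notin> V - S" by blast
  then have "f i \<in> S" "d u (f i) = i" "d (f i) v = d u v - i"
    using geodesic_dist[OF f refl, of i] assms(1) by auto
  with i show ?thesis by (intro bexI[of _ "f i"]) auto
qed

lemma dist_across_adjacent_pair:
  assumes "E y c" "E y c'" "v \<in> V - {c, c'}" "y \<in> V - {c, c'}"
    and "\<not> reach_in E (V - {c, c'}) v y"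
  shows "d v y = Suc (min (d v c) (d v c'))"
proof -
  have V: "c \<in> V" "c' \<in> V" "y \<in> V" "v \<in> V" using adj_in_V assms by auto
  have "d c y = 1" "d c' y = 1" using dist_adj adj_sym assms(1,2) by auto
  moreover obtain s where "s \<in> {c, c'}" "d v y = d v s + d s y"
    using geodesic_meets_separator[OF assms(3-5)] by blast
  moreover have "d v y \<le> d v c + d c y" "d v y \<le> d v c' + d c' y"
    using dist_triangle V by auto
  ultimately show ?thesis by auto
qed

lemma far_common_neighbour:
  assumes "t \<in> V - C" "t' \<in> V - C" "\<not> reach_in E (V - C) t t'"
    and common: "\<forall>x\<in>V - C. \<exists>y. reach_in E (V - C) x y \<and> E y c \<and> E y c'"
    and "v \<in> V - C"
  shows "\<exists>x. x \<in> V - C \<and> E x c \<and> E x c' \<and> \<not> reach_in E (V - C) v x"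
proof -
  have "\<not> reach_in E (V - C) v t \<or> \<not> reach_in E (V - C) v t'"
    using reach_in_trans[OF reach_in_sym] assms(3) by blast
  then obtain k where k: "k \<in> V - C" "\<not> reach_in E (V - C) v k"
    using assms(1,2) by blast
  then obtain x where x: "reach_in E (V - C) k x" "E x c" "E x c'" using common by blast
  have "\<not> reach_in E (V - C) v x" using k(2) reach_in_trans[OF _ reach_in_sym[OF x(1)]] by blast
  moreover have "x \<in> V - C" using x(1) unfolding reach_in_def by simp
  ultimately show ?thesis using x by blast
qed

end

section \<open>Chordal graphs\<close>

definition detour :: "('a \<Rightarrow> 'a \<Rightarrow> bool) \<Rightarrow> 'a set \<Rightarrow> 'a \<Rightarrow> 'a \<Rightarrow> (nat \<Rightarrow> 'a) \<Rightarrow> nat \<Rightarrow> bool" where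
  "detour E W p q f n \<longleftrightarrow> walk E f n \<and> f 0 = p \<and> f n = q \<and> 2 \<le> n \<and> (\<forall>i. 0 < i \<and> i < n \<longrightarrow> f i \<in> W)"

definition induced_detour :: "('a \<Rightarrow> 'a \<Rightarrow> bool) \<Rightarrow> 'a set \<Rightarrow> 'a \<Rightarrow> 'a \<Rightarrow> (nat \<Rightarrow> 'a) \<Rightarrow> nat \<Rightarrow> bool" where
  "induced_detour E W p q f n \<longleftrightarrow> detour E W p q f n \<and> inj_on f {..n} \<and>
     (\<forall>i j. i < j \<longrightarrow> j \<le> n \<longrightarrow> E (f i) (f j) \<longrightarrow> j = Suc i \<or> (i = 0 \<and> j = n))"

lemma detour_mono: "detour E W p q f n \<Longrightarrow> W \<subseteq> W' \<Longrightarrow> detour E W' p q f n"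
  unfolding detour_def by blast

lemma detour_2: "E p x \<Longrightarrow> E x q \<Longrightarrow> x \<in> W \<Longrightarrow> detour E W p q (\<lambda>i. if i = 0 then p else if i = 1 then x else q) 2"
  unfolding detour_def using walk_2[of E p x q] by (auto simp: less_2_cases_iff)

lemma detour_shortcut:
  assumes "detour E W p q f n" "i + 2 \<le> j" "j \<le> n" "E (f i) (f j)" "\<not> (i = 0 \<and> j = n)"
  shows "detour E W p q (\<lambda>k. if k \<le> i then f k else f (k + (j - i - 1))) (n - (j - i - 1))"
proof -
  let ?c = "j - i - 1"
  have f: "walk E f n" "f 0 = p" "f n = q" "\<forall>k. 0 < k \<and> k < n \<longrightarrow> f k \<in> W"
    using assms(1) unfolding detour_def by auto
  have "walk E (\<lambda>k. if k \<le> i then f k else f (k + ?c)) (n - ?c)"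
    unfolding walk_def
  proof (intro allI impI)
    fix k assume k: "k < n - ?c"
    consider "k < i" | "k = i" | "i < k" by linarith
    then show "E (if k \<le> i then f k else f (k + ?c)) (if Suc k \<le> i then f (Suc k) else f (Suc k + ?c))"
    proof cases
      case 1
      then show ?thesis using f(1) k unfolding walk_def by simp
    next
      case 2
      then have "Suc k + ?c = j" using assms(2) by simp
      with 2 assms(4) show ?thesis by simp
    next
      case 3
      then have "k + ?c < n" using k assms(2,3) by linarith
      with 3 show ?thesis using f(1) unfolding walk_def by simp
    qed
  qed
  moreover have "(if k \<le> i then f k else f (k + ?c)) \<in> W" if "0 < k" "k < n - ?c" for k
    using f(4) that assms(2,3) by simp
  ultimately show ?thesis using f assms(2,3,5) unfolding detour_def by auto
qed

context connected_simple_graph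
begin

lemma shortest_detour_induced:
  assumes "detour E W p q f0 n0" "p \<notin> W" "q \<notin> W" "p \<noteq> q"
  shows "\<exists>f n. induced_detour E W p q f n"
proof -
  define n where "n = (LEAST n. \<exists>f. detour E W p q f n)"
  have "\<exists>f. detour E W p q f n"
    unfolding n_def by (rule LeastI) (use assms(1) in blast)
  then obtain f where f: "detour E W p q f n" by blast
  have shortest: "n \<le> m" if "detour E W p q g m" for g m
    unfolding n_def by (rule Least_le) (use that in blast)
  have w: "walk E f n" "f 0 = p" "f n = q" "\<forall>k. 0 < k \<and> k < n \<longrightarrow> f k \<in> W"
    using f unfolding detour_def by auto
  have chordless: "j = Suc i \<or> (i = 0 \<and> j = n)" if "i < j" "j \<le> n" "E (f i) (f j)" for i j
  proof (rule ccontr)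
    assume "\<not> ?thesis"
    with that have "i + 2 \<le> j" "\<not> (i = 0 \<and> j = n)" by auto
    from shortest[OF detour_shortcut[OF f this(1) \<open>j \<le> n\<close> \<open>E (f i) (f j)\<close> this(2)]] this(1) that(2)
    show False by simp
  qed
  have "inj_on f {..n}"
  proof (rule linorder_inj_onI')
    fix i j assume ij: "i \<in> {..n}" "j \<in> {..n}" "i < j"
    show "f i \<noteq> f j"
    proof
      assume eq: "f i = f j"
      show False
      proof (cases "j = n")
        case True
        then show False using eq w ij assms(3,4) by (cases "i = 0") auto
      next
        case False
        then have "E (f i) (f (Suc j))" using eq w(1) ij unfolding walk_def by simp
        with chordless[of i "Suc j"] ij False have "i = 0" by auto
        then show False using eq w(2,4) ij False assms(2) by auto
      qed
    qed
  qed
  with f chordless show ?thesis unfolding induced_detour_def by blast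
qed

lemma induced_detour_reverse:
  assumes "induced_detour E W p q f n"
  shows "induced_detour E W q p (\<lambda>i. f (n - i)) n"
proof -
  have f: "walk E f n" "f 0 = p" "f n = q" "2 \<le> n" "\<forall>k. 0 < k \<and> k < n \<longrightarrow> f k \<in> W"
    and inj: "inj_on f {..n}"
    and chordless: "\<And>i j. i < j \<Longrightarrow> j \<le> n \<Longrightarrow> E (f i) (f j) \<Longrightarrow> j = Suc i \<or> (i = 0 \<and> j = n)"
    using assms(1) unfolding induced_detour_def detour_def by auto
  have "inj_on (\<lambda>i. f (n - i)) {..n}"
  proof (rule inj_onI)
    fix i j assume ij: "i \<in> {..n}" "j \<in> {..n}" "f (n - i) = f (n - j)"
    then have "n - i = n - j" using inj by (auto dest: inj_onD)
    with ij show "i = j" by auto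
  qed
  moreover have "j = Suc i \<or> (i = 0 \<and> j = n)" if "i < j" "j \<le> n" "E (f (n - i)) (f (n - j))" for i j
  proof -
    have "n - i = Suc (n - j) \<or> (n - j = 0 \<and> n - i = n)"
      using chordless[of "n - j" "n - i"] that adj_sym[OF that(3)] by auto
    then show ?thesis
    proof
      assume "n - i = Suc (n - j)"
      with that(1,2) show ?thesis by linarith
    qed (use that(1,2) in linarith)
  qed
  ultimately show ?thesis using f walk_reverse[OF f(1)] unfolding induced_detour_def detour_def by auto
qed

end

locale chordal_graph = connected_simple_graph +
  assumes chordal: "chordal V E"
begin

lemma induced_closed_walk_le_3:
  assumes walk: "walk E h N" and closed: "h N = h 0" and inj: "inj_on h {..<N}"
    and chordless: "\<And>i j. i < j \<Longrightarrow> j < N \<Longrightarrow> E (h i) (h j) \<Longrightarrow> j = Suc i \<or> (i = 0 \<and> j = N - 1)"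
  shows "N \<le> 3"
proof (rule ccontr)
  assume N: "\<not> N \<le> 3"
  have adj_iff: "E (h i) (h j) \<longleftrightarrow> j = Suc i mod N \<or> i = Suc j mod N" if "i < N" "j < N" for i j
  proof
    assume e: "E (h i) (h j)"
    then have "i \<noteq> j" using adj_irrefl by auto
    then consider "i < j" | "j < i" by linarith
    then show "j = Suc i mod N \<or> i = Suc j mod N"
      by cases (use chordless[of i j] chordless[of j i] e adj_sym[OF e] that in \<open>auto simp: mod_Suc\<close>)
  next
    have step: "E (h k) (h (Suc k mod N))" if "k < N" for k
      using walk that closed unfolding walk_def by (auto simp: mod_Suc)
    assume "j = Suc i mod N \<or> i = Suc j mod N"
    then show "E (h i) (h j)" using step[OF \<open>i < N\<close>] adj_sym[OF step[OF \<open>j < N\<close>]] by auto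
  qed
  have "induced_cycle V E (map h [0..<N])"
    unfolding induced_cycle_def using inj adj_iff walk_in_V[OF walk] N
    by (auto simp: distinct_map atLeast0LessThan)
  with N chordal show False unfolding chordal_def by fastforce
qed

lemma common_neighbour_in_detour:
  assumes "detour E W p q f0 n0" "p \<notin> W" "q \<notin> W" "E p q"
  shows "\<exists>u\<in>W. E p u \<and> E u q"
proof -
  obtain f n where f: "induced_detour E W p q f n"
    using shortest_detour_induced[OF assms(1-3)] assms(4) adj_irrefl by blast
  then have w: "walk E f n" "f 0 = p" "f n = q" "2 \<le> n" "\<forall>k. 0 < k \<and> k < n \<longrightarrow> f k \<in> W"
    and inj: "inj_on f {..n}"
    and chordless: "\<And>i j. i < j \<Longrightarrow> j \<le> n \<Longrightarrow> E (f i) (f j) \<Longrightarrow> j = Suc i \<or> (i = 0 \<and> j = n)"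
    unfolding induced_detour_def detour_def by auto
  text \<open>Closing the induced path with the edge \<open>q p\<close> gives an induced cycle, so it has length 3.\<close>
  define h where "h i = (if i \<le> n then f i else p)" for i
  have "walk E h (Suc n)"
    using w(1,3) adj_sym[OF assms(4)] unfolding walk_def h_def by (auto simp: less_Suc_eq)
  moreover have "h (Suc n) = h 0" using w(2) by (simp add: h_def)
  moreover have "inj_on h {..<Suc n}"
    using inj unfolding h_def inj_on_def by (simp add: lessThan_Suc_atMost)
  moreover have "j = Suc i \<or> (i = 0 \<and> j = Suc n - 1)" if "i < j" "j < Suc n" "E (h i) (h j)" for i j
    using chordless[of i j] that unfolding h_def by auto
  ultimately have "Suc n \<le> 3" by (rule induced_closed_walk_le_3)
  then have "n = 2" using w(4) by simp
  with w show ?thesis unfolding walk_def by (intro bexI[of _ "f 1"]) (auto simp: numeral_2_eq_2)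
qed

text \<open>Gluing the two paths gives an induced cycle of length at least 4 unless \<open>p\<close> and \<open>q\<close> are
  adjacent.\<close>

lemma adj_of_separated_induced_detours:
  assumes "induced_detour E W1 p q f n" "induced_detour E W2 q p g m"
    and "p \<notin> W1 \<union> W2" "q \<notin> W1 \<union> W2"
    and disj: "W1 \<inter> W2 = {}" and nonadj: "\<forall>u\<in>W1. \<forall>v\<in>W2. \<not> E u v"
  shows "E p q"
proof (rule ccontr)
  assume npq: "\<not> E p q"
  have f: "walk E f n" "f 0 = p" "f n = q" "2 \<le> n" "\<forall>k. 0 < k \<and> k < n \<longrightarrow> f k \<in> W1"
    and inj_f: "inj_on f {..n}"
    and chordless_f: "\<And>i j. i < j \<Longrightarrow> j \<le> n \<Longrightarrow> E (f i) (f j) \<Longrightarrow> j = Suc i \<or> (i = 0 \<and> j = n)"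
    using assms(1) unfolding induced_detour_def detour_def by auto
  have g: "walk E g m" "g 0 = q" "g m = p" "2 \<le> m" "\<forall>k. 0 < k \<and> k < m \<longrightarrow> g k \<in> W2"
    and inj_g: "inj_on g {..m}"
    and chordless_g: "\<And>i j. i < j \<Longrightarrow> j \<le> m \<Longrightarrow> E (g i) (g j) \<Longrightarrow> j = Suc i \<or> (i = 0 \<and> j = m)"
    using assms(2) unfolding induced_detour_def detour_def by auto
  have interior_g: "g k \<in> W2" if "0 < k" "k < m" for k
    using g(5) that by blast
  have distinct_fg: "f i \<noteq> g k" if "i \<le> n" "0 < k" "k < m" for i k
  proof -
    have "f i \<in> W1 \<or> f i = p \<or> f i = q"
      using f(2,3,5) that(1) by (cases "i = 0"; cases "i = n") auto
    moreover have "g k \<in> W2" using interior_g that(2,3) .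
    ultimately show ?thesis using disj assms(3,4) by auto
  qed
  have nonadj_fg: "\<not> E (f i) (g k)" if "0 < i" "i < n" "0 < k" "k < m" for i k
  proof -
    have "f i \<in> W1" using f(5) that(1,2) by blast
    moreover have "g k \<in> W2" using interior_g that(3,4) .
    ultimately show ?thesis using nonadj by blast
  qed
  define h where "h i = (if i \<le> n then f i else g (i - n))" for i
  have "walk E h (n + m)"
    using walk_append[OF f(1) g(1)] f(3) g(2) unfolding h_def by simp
  moreover have closed: "h (n + m) = h 0" using f(2) g(3,4) unfolding h_def by simp
  moreover have "inj_on h {..<n + m}"
  proof (rule linorder_inj_onI')
    fix i j assume ij: "i \<in> {..<n + m}" "j \<in> {..<n + m}" "i < j"
    consider "j \<le> n" | "i \<le> n" "n < j" | "n < i" by linarith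
    then show "h i \<noteq> h j"
    proof cases
      case 1
      then have "f i \<noteq> f j" using ij inj_f by (auto dest: inj_onD)
      with 1 ij show ?thesis unfolding h_def by simp
    next
      case 2
      then show ?thesis using distinct_fg[of i "j - n"] ij unfolding h_def by auto
    next
      case 3
      then have "g (i - n) \<noteq> g (j - n)" using ij inj_g by (auto dest: inj_onD)
      with 3 ij show ?thesis unfolding h_def by simp
    qed
  qed
  moreover have "j = Suc i \<or> (i = 0 \<and> j = n + m - 1)"
    if ij: "i < j" "j < n + m" "E (h i) (h j)" for i j
  proof -
    consider "j \<le> n" | "i = 0" "n < j" | "i = n" "n < j" | "0 < i" "i < n" "n < j" | "n < i"
      using ij by linarith
    then show ?thesis
    proof cases
      case 1
      then show ?thesis using chordless_f[of i j] ij npq f(2,3) unfolding h_def by auto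
    next
      case 2
      then have "E (g m) (g (j - n))" using ij f(2) g(3) unfolding h_def by auto
      then have "E (g (j - n)) (g m)" by (rule adj_sym)
      then have "m = Suc (j - n)" using chordless_g[of "j - n" m] 2 ij by auto
      with 2 ij show ?thesis by linarith
    next
      case 3
      then have "E (g 0) (g (j - n))" using ij f(3) g(2) unfolding h_def by auto
      moreover have "0 < j - n" "j - n < m" using 3 ij by auto
      ultimately have "j - n = 1" using chordless_g[of 0 "j - n"] by auto
      with 3 show ?thesis by linarith
    next
      case 4
      then show ?thesis using nonadj_fg[of i "j - n"] ij unfolding h_def by auto
    next
      case 5
      then have "j - n = Suc (i - n)" using chordless_g[of "i - n" "j - n"] ij unfolding h_def by auto
      with 5 show ?thesis by linarith
    qed
  qed
  ultimately have "n + m \<le> 3" by (rule induced_closed_walk_le_3)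
  with f(4) g(4) show False by simp
qed

lemma adj_of_separated_detours:
  assumes "detour E W1 p q f0 n0" "detour E W2 p q g0 m0"
    and "p \<notin> W1 \<union> W2" "q \<notin> W1 \<union> W2" "p \<noteq> q"
    and "W1 \<inter> W2 = {}" "\<forall>u\<in>W1. \<forall>v\<in>W2. \<not> E u v"
  shows "E p q"
proof -
  obtain f n where f: "induced_detour E W1 p q f n"
    using shortest_detour_induced[OF assms(1)] assms(3-5) by blast
  obtain g m where g: "induced_detour E W2 p q g m"
    using shortest_detour_induced[OF assms(2)] assms(3-5) by blast
  show ?thesis
    by (rule adj_of_separated_induced_detours[OF f induced_detour_reverse[OF g] assms(3,4,6,7)])
qed

end

section \<open>Forks\<close>

lemma rtranclp_first_exit:
  assumes "R\<^sup>*\<^sup>* a b" "P a" "\<not> P b"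
  shows "\<exists>u v. (\<lambda>x y. R x y \<and> P x \<and> P y)\<^sup>*\<^sup>* a u \<and> P u \<and> R u v \<and> \<not> P v"
  using assms
proof (induction rule: converse_rtranclp_induct)
  case (step y z)
  show ?case
  proof (cases "P z")
    case True
    with step obtain u v where path: "(\<lambda>x y. R x y \<and> P x \<and> P y)\<^sup>*\<^sup>* z u" "P u" "R u v" "\<not> P v"
      by blast
    have "(\<lambda>x y. R x y \<and> P x \<and> P y) y z" using step True by simp
    from converse_rtranclp_into_rtranclp[OF this path(1)] path(2-4) show ?thesis by blast
  qed (use step in blast)
qed simp

context connected_simple_graph
begin

definition fork :: "'a \<Rightarrow> 'a \<Rightarrow> 'a \<Rightarrow> 'a \<Rightarrow> bool" where
  "fork a b1 b2 t \<longleftrightarrow> b1 \<noteq> b2 \<and> E a b1 \<and> E a b2 \<and> Suc (d b1 t) = d a t \<and> Suc (d b2 t) = d a t"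

lemma detour_through_reach_in:
  assumes "E p x" "reach_in E S x y" "E y q" "S \<subseteq> W"
  shows "\<exists>f n. detour E W p q f n"
proof -
  obtain g n where g: "walk E g n" "g 0 = x" "g n = y" "\<forall>i\<le>n. g i \<in> S"
    using reach_in_walk[OF assms(2)] by blast
  define f where "f i = (if i = 0 then p else if i \<le> Suc n then g (i - 1) else q)" for i
  have "walk E f (Suc (Suc n))"
    unfolding walk_def
  proof (intro allI impI)
    fix i assume i: "i < Suc (Suc n)"
    consider "i = 0" | "i = Suc n" | "0 < i" "i < Suc n" using i by linarith
    then show "E (f i) (f (Suc i))"
    proof cases
      case 3
      then have "i - 1 < n" by linarith
      then have "E (g (i - 1)) (g (Suc (i - 1)))" using g(1) unfolding walk_def by blast
      with 3 show ?thesis unfolding f_def by simp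
    qed (use g(2,3) assms(1,3) in \<open>simp_all add: f_def\<close>)
  qed
  moreover have "f i \<in> W" if "0 < i" "i < Suc (Suc n)" for i
    using g(4) assms(4) that unfolding f_def by auto
  ultimately have "detour E W p q f (Suc (Suc n))"
    unfolding detour_def by (simp add: f_def)
  then show ?thesis by blast
qed

lemma detour_below:
  assumes "p \<in> V" "q \<in> V" "t \<in> V" "d p t = k" "d q t = k" "1 \<le> k"
  shows "\<exists>h. detour E {w\<in>V. d w t < k} p q h (k + k)"
proof -
  obtain f where f: "walk E f k" "f 0 = p" "f k = t" "\<forall>i\<le>k. d (f i) t = k - i \<and> f i \<in> V"
    using geodesic_to[OF assms(1,3)] assms(4) by auto
  obtain g where g: "walk E g k" "g 0 = q" "g k = t" "\<forall>i\<le>k. d (g i) t = k - i \<and> g i \<in> V"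
    using geodesic_to[OF assms(2,3)] assms(5) by auto
  define h where "h i = (if i \<le> k then f i else g (k - (i - k)))" for i
  have "walk E h (k + k)"
    unfolding h_def using walk_append[OF f(1) walk_reverse[OF g(1)]] f(3) g(3) by simp
  moreover have "h i \<in> {w\<in>V. d w t < k}" if "0 < i" "i < k + k" for i
    using f(4) g(4)[rule_format, of "k - (i - k)"] that unfolding h_def by auto
  ultimately have "detour E {w\<in>V. d w t < k} p q h (k + k)"
    using f(2) g(2) assms(6) unfolding detour_def h_def by auto
  then show ?thesis by blast
qed

end

context chordal_graph
begin

lemma common_neighbour_closer:
  assumes "E p q" "t \<in> V" "d p t = k" "d q t = k" "1 \<le> k"
  shows "\<exists>c. E p c \<and> E c q \<and> d c t + 1 = k"
proof -
  have "p \<in> V" "q \<in> V" using adj_in_V assms(1) by auto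
  then obtain h where "detour E {w\<in>V. d w t < k} p q h (k + k)"
    using detour_below assms(2-5) by blast
  then obtain c where c: "c \<in> V" "d c t < k" "E p c" "E c q"
    using common_neighbour_in_detour assms(1,3,4) by fastforce
  moreover have "k \<le> Suc (d c t)" using dist_le_Suc_adj[OF c(3) assms(2)] assms(3) by simp
  ultimately show ?thesis by auto
qed

lemma adj_of_detour_above:
  assumes "p \<in> V" "q \<in> V" "t \<in> V" "p \<noteq> q" "d p t = k" "d q t = k" "1 \<le> k"
    and above: "detour E {w\<in>V. Suc k \<le> d w t} p q f n"
  shows "E p q \<and> (\<exists>a. E p a \<and> E a q \<and> Suc k \<le> d a t)"
proof -
  obtain h where below: "detour E {w\<in>V. d w t < k} p q h (k + k)"
    using detour_below[OF assms(1-3,5-7)] by blast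
  have "\<forall>u\<in>{w\<in>V. Suc k \<le> d w t}. \<forall>v\<in>{w\<in>V. d w t < k}. \<not> E u v"
  proof (intro ballI notI)
    fix u v assume "u \<in> {w\<in>V. Suc k \<le> d w t}" "v \<in> {w\<in>V. d w t < k}" "E u v"
    with dist_le_Suc_adj[OF \<open>E u v\<close> assms(3)] show False by simp
  qed
  moreover have "{w\<in>V. Suc k \<le> d w t} \<inter> {w\<in>V. d w t < k} = {}" by auto
  ultimately have "E p q"
    using adj_of_separated_detours[OF above below _ _ assms(4)] assms(5,6) by auto
  moreover obtain a where "a \<in> {w\<in>V. Suc k \<le> d w t}" "E p a" "E a q"
    using common_neighbour_in_detour[OF above _ _ \<open>E p q\<close>] assms(5,6) by auto
  ultimately show ?thesis by auto
qed

lemma fork_near_closer_end: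
  assumes cc: "E c c'" and t: "t \<in> V" "t \<noteq> c" and closer: "d c t < d c' t"
    and w: "reach_in E (V - {c, c'}) t w" "E w c" "E w c'"
  shows "\<exists>a b. fork a c b t \<and> d a t = Suc (d c t) \<and> E a c \<and> E b c"
proof -
  have cV: "c \<in> V" "c' \<in> V" using adj_in_V cc by auto
  define \<delta> where "\<delta> = d c t"
  have c'_dist: "d c' t = Suc \<delta>"
    using dist_le_Suc_adj[OF adj_sym[OF cc] t(1)] closer unfolding \<delta>_def by simp
  have "\<delta> \<noteq> 0" using dist_eq_0[OF cV(1) t(1)] t(2) unfolding \<delta>_def by blast
  then have \<delta>1: "1 \<le> \<delta>" by simp
  have wS: "w \<in> V - {c, c'}" using w(1) unfolding reach_in_def by auto
  have "\<delta> \<le> d w t" "d w t \<le> Suc \<delta>"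
    using dist_le_Suc_adj[OF adj_sym[OF w(3)] t(1)] dist_le_Suc_adj[OF w(2) t(1)] c'_dist
    unfolding \<delta>_def by auto
  then consider "d w t = \<delta>" | "d w t = Suc \<delta>" by linarith
  then show ?thesis
  proof cases
    case 1
    have "fork c' c w t"
      unfolding fork_def using 1 c'_dist cc w(3) wS adj_sym unfolding \<delta>_def by auto
    with c'_dist adj_sym[OF cc] w(2) show ?thesis unfolding \<delta>_def by blast
  next
    case 2
    text \<open>Walk from \<open>w\<close> towards \<open>t\<close> avoiding \<open>c, c'\<close> until it first drops to level \<open>\<delta>\<close>.\<close>
    define R where "R x y \<longleftrightarrow> x \<in> V - {c, c'} \<and> y \<in> V - {c, c'} \<and> E x y" for x y
    define P where "P y \<longleftrightarrow> Suc \<delta> \<le> d y t" for y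
    have "R\<^sup>*\<^sup>* w t" using reach_in_sym[OF w(1)] unfolding reach_in_def R_def by auto
    moreover have "P w" "\<not> P t" using 2 dist_self[of t] unfolding P_def by auto
    ultimately obtain u v where uv: "(\<lambda>x y. R x y \<and> P x \<and> P y)\<^sup>*\<^sup>* w u" "P u" "R u v" "\<not> P v"
      using rtranclp_first_exit[of R w t P] by blast
    have v: "v \<in> V - {c, c'}" "E u v" using uv(3) unfolding R_def by auto
    have v_dist: "d v t = \<delta>" using uv(2,4) dist_le_Suc_adj[OF v(2) t(1)] unfolding P_def by auto
    define S where "S = {y \<in> V - {c, c'}. P y}"
    have "(\<lambda>x y. x \<in> S \<and> y \<in> S \<and> E x y)\<^sup>*\<^sup>* w u"
      using uv(1) unfolding S_def R_def by (rule rtranclp_mono[THEN predicate2D, rotated]) auto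
    then have "reach_in E S w u" using wS \<open>P w\<close> uv(2,3) unfolding reach_in_def S_def R_def by auto
    moreover have "S \<subseteq> {y\<in>V. Suc \<delta> \<le> d y t}" unfolding S_def P_def by auto
    ultimately obtain f n where "detour E {y\<in>V. Suc \<delta> \<le> d y t} c v f n"
      using detour_through_reach_in[OF adj_sym[OF w(2)] _ v(2)] by blast
    from adj_of_detour_above[OF cV(1) _ t(1) _ _ v_dist \<delta>1 this] v
    obtain a where "E c v" "E c a" "E a v" "Suc \<delta> \<le> d a t"
      unfolding \<delta>_def by auto
    moreover have "d a t \<le> Suc \<delta>" using dist_le_Suc_adj[OF adj_sym[OF \<open>E c a\<close>] t(1)] unfolding \<delta>_def .
    ultimately have "fork a c v t" "d a t = Suc \<delta>"
      unfolding fork_def using v v_dist adj_sym unfolding \<delta>_def by auto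
    with \<open>E c a\<close> \<open>E c v\<close> adj_sym show ?thesis unfolding \<delta>_def by blast
  qed
qed

text \<open>The vertex \<open>x\<close> is only needed when \<open>c\<close> and \<open>c'\<close> are equally far from \<open>t\<close>; otherwise the
  fork is found on the side of \<open>t\<close>, using the common neighbour \<open>w\<close>.\<close>

lemma fork_near_edge:
  assumes cc: "E c c'" and t: "t \<in> V" "t \<noteq> c" "t \<noteq> c'"
    and x: "E x c" "E x c'" "d x t = Suc (min (d c t) (d c' t))"
    and w: "reach_in E (V - {c, c'}) t w" "E w c" "E w c'"
  shows "\<exists>a b1 b2. fork a b1 b2 t \<and> d a t = Suc (min (d c t) (d c' t))
     \<and> (\<forall>e\<in>{c, c'}. Suc (d e t) = d a t \<longrightarrow> E a e)
     \<and> (\<forall>v\<in>{a, b1, b2}. v = c \<or> v = c' \<or> E v c \<or> E v c')"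
proof -
  consider "d c t = d c' t" | "d c t < d c' t" | "d c' t < d c t" by linarith
  then show ?thesis
  proof cases
    case 1
    then have "fork x c c' t" unfolding fork_def using x cc adj_irrefl by auto
    with 1 x show ?thesis by auto
  next
    case 2
    then obtain a b where "fork a c b t" "d a t = Suc (d c t)" "E a c" "E b c"
      using fork_near_closer_end[OF cc t(1,2) _ w] by blast
    with 2 show ?thesis by (intro exI[of _ a] exI[of _ c] exI[of _ b]) auto
  next
    case 3
    have w': "reach_in E (V - {c', c}) t w" using w(1) by (simp add: insert_commute)
    obtain a b where "fork a c' b t" "d a t = Suc (d c' t)" "E a c'" "E b c'"
      using fork_near_closer_end[OF adj_sym[OF cc] t(1,3) 3 w' w(3,2)] by blast
    with 3 show ?thesis by (intro exI[of _ a] exI[of _ c'] exI[of _ b]) auto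
  qed
qed

lemma fork_beyond_pair:
  assumes c1: "E c1 c1'" and "{c1, c1'} \<inter> {c2, c2'} = {}"
    and tips: "t1 \<in> V - {c1, c1'}" "t1' \<in> V - {c1, c1'}" "\<not> reach_in E (V - {c1, c1'}) t1 t1'"
    and common1: "\<forall>x\<in>V - {c1, c1'}. \<exists>y. reach_in E (V - {c1, c1'}) x y \<and> E y c1 \<and> E y c1'"
    and z: "z \<in> V - {c2, c2'}" "E z c2" "E z c2'" "\<not> reach_in E (V - {c2, c2'}) c1 z"
  shows "\<exists>a b1 b2. fork a b1 b2 z \<and> 3 \<le> d a z \<and>
    (\<forall>v\<in>{a, b1, b2}. v \<in> V - {c2, c2'} \<and> \<not> reach_in E (V - {c2, c2'}) v z)"
proof -
  have c1V: "c1 \<in> V - {c2, c2'}" "c1' \<in> V - {c2, c2'}" using adj_in_V[OF c1] assms(2) by auto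
  have reach_c1: "reach_in E (V - {c2, c2'}) v c1"
    if "v = c1 \<or> v = c1' \<or> E v c1 \<or> E v c1'" "v \<in> V - {c2, c2'}" for v
    using reach_in_closed_neighbourhood[OF c1 c1V that(2,1)] .
  have "\<not> (z = c1 \<or> z = c1' \<or> E z c1 \<or> E z c1')"
    using reach_c1[OF _ z(1)] reach_in_sym[of "V - {c2, c2'}" z c1] z(4) by blast
  then have zV: "z \<in> V" "z \<noteq> c1" "z \<noteq> c1'" "\<not> E c1 z" "\<not> E c1' z"
    using z(1) adj_sym by auto
  obtain x where x: "x \<in> V - {c1, c1'}" "E x c1" "E x c1'" "\<not> reach_in E (V - {c1, c1'}) z x"
    using far_common_neighbour[OF tips common1, of z] zV by blast
  obtain w where w: "reach_in E (V - {c1, c1'}) z w" "E w c1" "E w c1'"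
    using common1 zV by blast
  have "d z x = Suc (min (d z c1) (d z c1'))"
    using dist_across_adjacent_pair[OF x(2,3) _ x(1,4)] zV by blast
  then have "d x z = Suc (min (d c1 z) (d c1' z))"
    using dist_commute zV(1) x(1) adj_in_V[OF c1] by auto
  from fork_near_edge[OF c1 zV(1-3) x(2,3) this w]
  obtain a b1 b2 where fork: "fork a b1 b2 z" "d a z = Suc (min (d c1 z) (d c1' z))"
    and near: "\<forall>v\<in>{a, b1, b2}. v = c1 \<or> v = c1' \<or> E v c1 \<or> E v c1'"
    by blast
  have "2 \<le> d c1 z" "2 \<le> d c1' z"
    using dist_ge_2 zV adj_in_V[OF c1] by auto
  then have "3 \<le> d a z" using fork(2) by simp
  moreover have "v \<in> V - {c2, c2'} \<and> \<not> reach_in E (V - {c2, c2'}) v z" if v: "v \<in> {a, b1, b2}" for v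
  proof -
    have "2 \<le> d v z" using v fork \<open>3 \<le> d a z\<close> unfolding fork_def by auto
    moreover have "d c2 z = 1" "d c2' z = 1" using dist_adj adj_sym z(2,3) by auto
    moreover have "v \<in> V" using v fork(1) adj_in_V unfolding fork_def by auto
    ultimately have "v \<in> V - {c2, c2'}" by auto
    moreover have "\<not> reach_in E (V - {c2, c2'}) v z"
      using reach_in_trans[OF reach_in_sym[OF reach_c1[OF near[rule_format, OF v] \<open>v \<in> V - {c2, c2'}\<close>]]] z(4)
      by blast
    ultimately show ?thesis by blast
  qed
  ultimately show ?thesis using fork(1) by blast
qed

lemma fork_towards_pair:
  assumes c2: "E c2 c2'"
    and common2: "\<forall>x\<in>V - {c2, c2'}. \<exists>y. reach_in E (V - {c2, c2'}) x y \<and> E y c2 \<and> E y c2'"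
    and z: "z \<in> V - {c2, c2'}" "E z c2" "E z c2'"
    and fork: "fork a b1 b2 z" "3 \<le> d a z"
    and beyond: "\<forall>v\<in>{a, b1, b2}. v \<in> V - {c2, c2'} \<and> \<not> reach_in E (V - {c2, c2'}) v z"
  shows "\<exists>t e1 e2. fork t e1 e2 a \<and> fork a b1 b2 t \<and> 3 \<le> d a t"
proof -
  have zV: "z \<in> V" using z by simp
  have dist_z: "d v z = Suc (min (d v c2) (d v c2'))" if "v \<in> {a, b1, b2}" for v
    using dist_across_adjacent_pair[OF z(2,3)] beyond that z(1) by blast
  have aV: "a \<in> V" "a \<noteq> c2" "a \<noteq> c2'" using beyond by auto
  define m where "m = min (d c2 a) (d c2' a)"
  have c2V: "c2 \<in> V" "c2' \<in> V" using adj_in_V[OF c2] by auto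
  have m_a: "d a z = Suc m"
    using dist_z[of a] dist_commute[OF aV(1)] c2V unfolding m_def by auto
  obtain w where w: "reach_in E (V - {c2, c2'}) a w" "E w c2" "E w c2'"
    using common2 beyond by blast
  have "d z a = Suc (min (d c2 a) (d c2' a))"
    using m_a dist_commute[OF zV aV(1)] unfolding m_def by simp
  from fork_near_edge[OF c2 aV z(2,3) this w]
  obtain t e1 e2 where t: "fork t e1 e2 a" "d t a = Suc m"
    and t_adj: "\<forall>e\<in>{c2, c2'}. Suc (d e a) = d t a \<longrightarrow> E t e"
    unfolding m_def by blast
  have tV: "t \<in> V" using t(1) adj_in_V unfolding fork_def by auto
  have D: "d a t = Suc m" using t(2) dist_commute[OF aV(1) tV] by simp
  text \<open>A neighbour \<open>b\<close> of \<open>a\<close> on a geodesic to \<open>z\<close> reaches \<open>z\<close> through the end of the pair nearer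
    to \<open>a\<close>, and that end is adjacent to \<open>t\<close>.\<close>
  have "Suc (d b t) = d a t" if b: "b \<in> {b1, b2}" for b
  proof -
    have bV: "b \<in> V" "E a b" using b fork(1) adj_in_V unfolding fork_def by auto
    have "d b z = m" using b fork m_a unfolding fork_def by auto
    then obtain e where e: "e \<in> {c2, c2'}" "Suc (d b e) = m"
      using dist_z[of b] b by (cases "d b c2 \<le> d b c2'") auto
    have eV: "e \<in> V" using e(1) c2V by auto
    have "d e a \<le> d e b + d b a" using dist_triangle[OF eV bV(1) aV(1)] .
    moreover have "d e b = d b e" "d b a = 1"
      using dist_commute[OF eV bV(1)] dist_adj adj_sym[OF bV(2)] by auto
    moreover have "m \<le> d e a" using e(1) unfolding m_def by auto
    ultimately have "Suc (d e a) = d t a" using e(2) t(2) by simp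
    then have "d e t = 1" using t_adj e(1) dist_adj adj_sym by blast
    then have "d b t \<le> m" using dist_triangle[OF bV(1) eV tV] e(2) by simp
    moreover have "d a t \<le> Suc (d b t)" using dist_le_Suc_adj[OF bV(2) tV] .
    ultimately show ?thesis using D by simp
  qed
  then have "fork a b1 b2 t" using fork(1) unfolding fork_def by auto
  moreover have "3 \<le> d a t" using D m_a fork(2) by simp
  ultimately show ?thesis using t(1) by blast
qed

end

section \<open>Layers of a geodesic\<close>

locale geodesic_layers = chordal_graph +
  fixes a t :: 'a and D :: nat
  assumes a_in_V: "a \<in> V" and t_in_V: "t \<in> V" and dist_a_t: "d a t = D"
begin

definition layer :: "nat \<Rightarrow> 'a set" where
  "layer k = {v\<in>V. d v a = k \<and> d v t = D - k}"

definition thin_layer :: "nat \<Rightarrow> bool" where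
  "thin_layer k \<longleftrightarrow> (\<forall>x\<in>layer k. \<forall>y\<in>layer k. x = y)"

lemma layer_in_V: "v \<in> layer k \<Longrightarrow> v \<in> V"
  unfolding layer_def by auto

lemma finite_layer: "finite (layer k)"
  using finite_V unfolding layer_def by auto

lemma layers_disjoint: "x \<in> layer k \<Longrightarrow> y \<in> layer l \<Longrightarrow> k \<noteq> l \<Longrightarrow> x \<noteq> y"
  unfolding layer_def by auto

lemma dist_t_a: "d t a = D"
  using dist_commute[OF a_in_V t_in_V] dist_a_t by simp

lemma layer_le_D:
  assumes "v \<in> layer k"
  shows "k \<le> D"
proof (cases "d v t = 0")
  case True
  then have "v = t" using dist_eq_0 layer_in_V[OF assms] t_in_V by blast
  then show ?thesis using assms dist_t_a unfolding layer_def by simp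
qed (use assms in \<open>simp add: layer_def\<close>)

lemma layer_0: "layer 0 = {a}"
  using a_in_V dist_a_t dist_self[of a] dist_eq_0[OF _ a_in_V] unfolding layer_def by auto

lemma thin_layer_0: "thin_layer 0"
  using layer_0 unfolding thin_layer_def by simp

lemma layer_D: "layer D = {t}"
  using t_in_V dist_t_a dist_self[of t] dist_eq_0[OF _ t_in_V] unfolding layer_def by auto

lemma layer_adj:
  assumes "u \<in> layer k" "v \<in> layer l" "E u v"
  shows "l \<le> Suc k \<and> k \<le> Suc l"
  using dist_le_Suc_adj[OF assms(3) a_in_V] dist_le_Suc_adj[OF adj_sym[OF assms(3)] a_in_V] assms
  unfolding layer_def by auto

lemma layer_far_nonadj: "x \<in> layer k \<Longrightarrow> y \<in> layer l \<Longrightarrow> Suc k < l \<Longrightarrow> \<not> E x y \<and> \<not> E y x"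
  using layer_adj adj_sym by fastforce

lemma in_layer_if_dist_a:
  assumes "v \<in> V" "d v a = k" "d v t \<le> D - k"
  shows "v \<in> layer k"
  using dist_triangle[OF a_in_V assms(1) t_in_V] dist_commute[OF a_in_V assms(1)] dist_a_t assms
  unfolding layer_def by auto

lemma in_layer_if_dist_t:
  assumes "v \<in> V" "d v t = D - k" "d v a \<le> k" "k \<le> D"
  shows "v \<in> layer k"
  using dist_triangle[OF a_in_V assms(1) t_in_V] dist_commute[OF a_in_V assms(1)] dist_a_t assms
  unfolding layer_def by auto

lemma layer_pred_adj:
  assumes "u \<in> layer k" "0 < k"
  shows "\<exists>v\<in>layer (k - 1). E u v"
proof -
  have u: "u \<in> V" "d u a = k" "d u t = D - k" using assms unfolding layer_def by auto
  obtain v where v: "E u v" "d v a = k - 1" using dist_Suc_adj[OF u(1) a_in_V, of "k - 1"] u assms(2) by auto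
  have "d v t \<le> D - (k - 1)"
    using dist_le_Suc_adj[OF adj_sym[OF v(1)] t_in_V] u assms(2) layer_le_D[OF assms(1)] by linarith
  then show ?thesis using in_layer_if_dist_a[OF _ v(2)] adj_in_V v(1) by blast
qed

lemma layer_succ_adj:
  assumes "u \<in> layer k" "k < D"
  shows "\<exists>v\<in>layer (Suc k). E u v"
proof -
  have u: "u \<in> V" "d u a = k" "d u t = Suc (D - Suc k)" using assms unfolding layer_def by auto
  obtain v where v: "E u v" "d v t = D - Suc k" using dist_Suc_adj[OF u(1) t_in_V u(3)] by blast
  have "d v a \<le> Suc k" using dist_le_Suc_adj[OF adj_sym[OF v(1)] a_in_V] u(2) by simp
  then show ?thesis using in_layer_if_dist_t[OF _ v(2)] adj_in_V v(1) assms(2) by fastforce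
qed

lemma layer_nonempty: "k \<le> D \<Longrightarrow> layer k \<noteq> {}"
proof (induction k)
  case (Suc k)
  then obtain u where "u \<in> layer k" by auto
  with Suc.prems show ?case using layer_succ_adj[of u k] by auto
qed (use layer_0 in auto)

text \<open>Two vertices of an inner layer are joined by a path through vertices closer to \<open>t\<close> and by
  one through vertices closer to \<open>a\<close>; these paths are separated, so chordality makes the two
  vertices adjacent.\<close>

lemma layer_clique:
  assumes "u \<in> layer k" "v \<in> layer k" "u \<noteq> v" "1 \<le> k" "k < D"
  shows "E u v"
proof -
  have u: "u \<in> V" "d u a = k" "d u t = D - k" and v: "v \<in> V" "d v a = k" "d v t = D - k"
    using assms unfolding layer_def by auto
  have "1 \<le> D - k" using assms(5) by simp
  then obtain h where h: "detour E {w\<in>V. d w t < D - k} u v h ((D - k) + (D - k))"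
    using detour_below[OF u(1) v(1) t_in_V u(3) v(3)] by blast
  have "{w\<in>V. d w t < D - k} \<subseteq> {w\<in>V. Suc k \<le> d w a}"
    using dist_triangle[OF a_in_V _ t_in_V] dist_commute[OF a_in_V] dist_a_t by fastforce
  from adj_of_detour_above[OF u(1) v(1) a_in_V assms(3) u(2) v(2) assms(4) detour_mono[OF h this]]
  show ?thesis by blast
qed

lemma layer_common_succ:
  assumes "u \<in> layer k" "v \<in> layer k" "u \<noteq> v" "1 \<le> k" "k < D"
  shows "\<exists>c\<in>layer (Suc k). E u c \<and> E v c"
proof -
  have u: "d u t = D - k" and v: "d v t = D - k" using assms unfolding layer_def by auto
  have "1 \<le> D - k" using assms(5) by simp
  then obtain c where c: "E u c" "E c v" "d c t + 1 = D - k"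
    using common_neighbour_closer[OF layer_clique[OF assms] t_in_V u v] by blast
  have "d c a \<le> Suc k"
    using dist_le_Suc_adj[OF adj_sym[OF c(1)] a_in_V] assms(1) unfolding layer_def by simp
  then have "c \<in> layer (Suc k)" using in_layer_if_dist_t[of c "Suc k"] c adj_in_V assms(5) by auto
  then show ?thesis using c adj_sym by blast
qed

lemma adj_of_thin_layer_below:
  assumes "u \<in> layer k" "v \<in> layer (Suc k)" "thin_layer k"
  shows "E u v"
proof -
  obtain w where w: "w \<in> layer k" "E v w" using layer_pred_adj[OF assms(2)] by auto
  then have "w = u" using assms(1,3) unfolding thin_layer_def by simp
  with w show ?thesis using adj_sym by simp
qed

lemma adj_of_thin_layer_above:
  assumes "u \<in> layer k" "v \<in> layer (Suc k)" "thin_layer (Suc k)"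
  shows "E u v"
proof -
  have "k < D" using layer_le_D[OF assms(2)] by simp
  then obtain w where w: "w \<in> layer (Suc k)" "E u w" using layer_succ_adj[OF assms(1)] by auto
  then have "w = v" using assms(2,3) unfolding thin_layer_def by simp
  with w show ?thesis by simp
qed

lemma succ_neighbourhoods_nested:
  assumes "u \<in> layer k" "v \<in> layer k" "1 \<le> k" "k < D"
  shows "{w\<in>layer (Suc k). E u w} \<subseteq> {w\<in>layer (Suc k). E v w} \<or>
    {w\<in>layer (Suc k). E v w} \<subseteq> {w\<in>layer (Suc k). E u w}"
proof (rule ccontr)
  assume "\<not> ?thesis"
  then obtain f1 f2 where f1: "f1 \<in> layer (Suc k)" "E u f1" "\<not> E v f1"
    and f2: "f2 \<in> layer (Suc k)" "E v f2" "\<not> E u f2"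
    by blast
  have "u \<noteq> v" "f1 \<noteq> f2" using f1 f2 by auto
  have "Suc k \<noteq> D" using f1(1) f2(1) \<open>f1 \<noteq> f2\<close> layer_D by auto
  then have "E f1 f2" using layer_clique[OF f1(1) f2(1) \<open>f1 \<noteq> f2\<close>] layer_le_D[OF f1(1)] by simp
  text \<open>The paths \<open>u f1 f2\<close> and \<open>u v f2\<close> are separated, so \<open>u\<close> and \<open>f2\<close> would be adjacent.\<close>
  have "E u v" using layer_clique[OF assms(1,2) \<open>u \<noteq> v\<close> assms(3,4)] .
  have distinct: "u \<noteq> f1" "u \<noteq> f2" "v \<noteq> f1" "v \<noteq> f2"
    using layers_disjoint[OF assms(1) f1(1)] layers_disjoint[OF assms(1) f2(1)]
      layers_disjoint[OF assms(2) f1(1)] layers_disjoint[OF assms(2) f2(1)] by simp_all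
  have via_f1: "detour E {f1} u f2 (\<lambda>i. if i = 0 then u else if i = 1 then f1 else f2) 2"
    by (rule detour_2[of E]) (use f1(2) \<open>E f1 f2\<close> in auto)
  have via_v: "detour E {v} u f2 (\<lambda>i. if i = 0 then u else if i = 1 then v else f2) 2"
    by (rule detour_2[of E]) (use \<open>E u v\<close> f2(2) in auto)
  have "\<forall>x\<in>{f1}. \<forall>y\<in>{v}. \<not> E x y" using f1(3) adj_sym by blast
  moreover have "u \<notin> {f1} \<union> {v}" "f2 \<notin> {f1} \<union> {v}" "{f1} \<inter> {v} = {}"
    using distinct \<open>u \<noteq> v\<close> \<open>f1 \<noteq> f2\<close> by auto
  ultimately have "E u f2"
    using adj_of_separated_detours[OF via_f1 via_v _ _ distinct(2)] by blast
  with f2(3) show False by simp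
qed

text \<open>A vertex of layer \<open>k\<close> with the largest neighbourhood in layer \<open>k + 1\<close> sees all of it.\<close>

lemma layer_hub:
  assumes "1 \<le> k" "k < D"
  shows "\<exists>h\<in>layer k. \<forall>w\<in>layer (Suc k). E h w"
proof -
  define N where "N u = {w\<in>layer (Suc k). E u w}" for u
  have finite_N: "finite (N u)" for u
    unfolding N_def using finite_layer[of "Suc k"] by simp
  obtain x0 where x0: "x0 \<in> layer k" using layer_nonempty[of k] assms by auto
  have "N y \<subseteq> V" for y unfolding N_def layer_def by auto
  then have "card (N y) < Suc (card V)" for y using card_mono[OF finite_V] by (simp add: le_imp_less_Suc)
  then have "\<forall>y. y \<in> layer k \<longrightarrow> card (N y) < Suc (card V)" by blast
  from ex_has_greatest_nat[of "\<lambda>x. x \<in> layer k", OF x0 this]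
  obtain h where h: "h \<in> layer k" "\<forall>y. y \<in> layer k \<longrightarrow> card (N y) \<le> card (N h)"
    by blast
  have "E h w" if w: "w \<in> layer (Suc k)" for w
  proof -
    obtain b where b: "b \<in> layer k" "E w b" using layer_pred_adj[OF w] by auto
    have "N b \<subseteq> N h"
    proof (rule ccontr)
      assume "\<not> N b \<subseteq> N h"
      with succ_neighbourhoods_nested[OF b(1) h(1) assms] have "N h \<subset> N b"
        unfolding N_def by blast
      then have "card (N h) < card (N b)" by (rule psubset_card_mono[OF finite_N])
      moreover have "card (N b) \<le> card (N h)" using h(2) b(1) by blast
      ultimately show False by simp
    qed
    moreover have "w \<in> N b" using w adj_sym[OF b(2)] unfolding N_def by simp
    ultimately show ?thesis unfolding N_def by blast
  qed
  with h(1) show ?thesis by blast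
qed

end

section \<open>Finding the obstructions\<close>

definition has_obstruction :: "'a set \<Rightarrow> ('a \<Rightarrow> 'a \<Rightarrow> bool) \<Rightarrow> bool" where
  "has_obstruction V E \<longleftrightarrow> has_induced V E F1_V F1_E \<or> has_induced V E F2_V F2_E \<or>
     (\<exists>i\<ge>1. has_induced V E (H_V i) (H_E i))"

text \<open>The layer that a vertex of \<open>H_i\<close> occupies when \<open>H_i\<close> is laid out along a geodesic from \<open>x1\<close>:
  \<open>x2, x3\<close> in layer 1, \<open>y_k\<close> in layer \<open>k + 1\<close>, \<open>z2, z3\<close> in layer \<open>i + 2\<close> and \<open>z1\<close> in layer \<open>i + 3\<close>.\<close>

definition H_level :: "nat \<Rightarrow> nat \<Rightarrow> nat" where
  "H_level i u = (if u = 0 then 0 else if u \<le> 2 then 1 else if u = 3 then i + 3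
     else if u \<le> 5 then i + 2 else u - 4)"

lemma nat_cases_below_6: "u = 0 \<or> u = 1 \<or> u = 2 \<or> u = 3 \<or> u = 4 \<or> u = 5 \<or> 6 \<le> (u::nat)"
  by arith

lemma H_E_iff_level:
  assumes "1 \<le> i" "u \<in> H_V i" "v \<in> H_V i"
  shows "H_E i u v \<longleftrightarrow> u \<noteq> v \<and> H_level i u \<le> Suc (H_level i v) \<and> H_level i v \<le> Suc (H_level i u)"
  using assms unfolding H_E_def H_E0_def H_V_def H_level_def by auto

lemma H_level_eq:
  assumes "u \<in> H_V i" "v \<in> H_V i" "u \<noteq> v" "H_level i u = H_level i v"
  shows "(u = 1 \<and> v = 2) \<or> (u = 2 \<and> v = 1) \<or> (u = 4 \<and> v = 5) \<or> (u = 5 \<and> v = 4)"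
  using nat_cases_below_6[of u] nat_cases_below_6[of v] assms unfolding H_V_def
  by (elim disjE) (simp_all add: H_level_def)

lemma H_level_top:
  assumes "u \<in> H_V i" "v \<in> H_V i" "H_level i u = i + 2" "H_level i v = i + 3"
  shows "(u = 4 \<or> u = 5) \<and> v = 3"
  using nat_cases_below_6[of u] nat_cases_below_6[of v] assms unfolding H_V_def
  by (elim disjE) (simp_all add: H_level_def)

context geodesic_layers
begin

lemma has_induced_of_layer_map:
  assumes layer: "\<And>u. u \<in> VH \<Longrightarrow> f u \<in> layer (lev u)"
    and EH: "\<And>u v. u \<in> VH \<Longrightarrow> v \<in> VH \<Longrightarrow> EH u v \<longleftrightarrow> u \<noteq> v \<and> lev u \<le> Suc (lev v) \<and> lev v \<le> Suc (lev u)"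
    and adj: "\<And>u v. u \<in> VH \<Longrightarrow> v \<in> VH \<Longrightarrow> u \<noteq> v \<Longrightarrow> lev u \<le> Suc (lev v) \<Longrightarrow> lev v \<le> Suc (lev u) \<Longrightarrow>
      E (f u) (f v)"
  shows "has_induced V E VH EH"
  unfolding has_induced_def
proof (intro exI[of _ f] conjI ballI)
  show "inj_on f VH"
  proof (rule inj_onI, rule ccontr)
    fix u v assume uv: "u \<in> VH" "v \<in> VH" "f u = f v" "u \<noteq> v"
    then have "lev u = lev v" using layers_disjoint[OF layer[OF uv(1)] layer[OF uv(2)]] by auto
    with adj[OF uv(1,2,4)] uv(3) adj_irrefl show False by simp
  qed
  show "f ` VH \<subseteq> V" using layer layer_in_V by blast
  fix u v assume uv: "u \<in> VH" "v \<in> VH"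
  show "E (f u) (f v) \<longleftrightarrow> EH u v"
  proof
    assume e: "E (f u) (f v)"
    then have "u \<noteq> v" using adj_irrefl by auto
    with layer_adj[OF layer[OF uv(1)] layer[OF uv(2)] e] show "EH u v" using EH[OF uv] by simp
  qed (use EH[OF uv] adj[OF uv] in simp)
qed

lemma F1_or_F2_of_wide_layers_1_2:
  assumes "\<not> thin_layer 1" "\<not> thin_layer 2" "3 \<le> D"
  shows "has_induced V E F1_V F1_E \<or> has_induced V E F2_V F2_E"
proof -
  obtain h where h: "h \<in> layer 1" "\<forall>w\<in>layer 2. E h w"
    using layer_hub[of 1] assms(3) by (auto simp: numeral_2_eq_2)
  obtain s where s: "s \<in> layer 1" "s \<noteq> h" using assms(1) h(1) unfolding thin_layer_def by blast
  obtain r2 where r2: "r2 \<in> layer 2" "E s r2"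
    using layer_succ_adj[OF s(1)] assms(3) by (auto simp: numeral_2_eq_2)
  obtain s' where s': "s' \<in> layer 2" "s' \<noteq> r2" using assms(2) r2(1) unfolding thin_layer_def by blast
  obtain r3 where r3: "r3 \<in> layer 3" "E r2 r3" "E s' r3"
    using layer_common_succ[OF r2(1) s'(1) s'(2)[symmetric]] assms(3) by (auto simp: numeral_3_eq_3)
  have a0: "a \<in> layer 0" using layer_0 by simp
  have E1: "E a s" "E a h" using adj_of_thin_layer_below[OF a0 _ thin_layer_0] s(1) h(1) by simp_all
  have E2: "E s h" using layer_clique[OF s(1) h(1) s(2)] assms(3) by simp
  have E3: "E h r2" "E h s'" using h(2) r2(1) s'(1) by auto
  have E4: "E r2 s'" using layer_clique[OF r2(1) s'(1) s'(2)[symmetric]] assms(3) by simp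
  note Es = E1 E2 E3 E4 r2(2) r3(2,3)
  have Es': "E s a" "E h a" "E h s" "E r2 h" "E s' h" "E s' r2" "E r2 s" "E r3 r2" "E r3 s'"
    using Es adj_sym by blast+
  have N: "\<not> E a r2" "\<not> E r2 a" "\<not> E a s'" "\<not> E s' a" "\<not> E a r3" "\<not> E r3 a"
    "\<not> E s r3" "\<not> E r3 s" "\<not> E h r3" "\<not> E r3 h"
    using layer_far_nonadj[OF a0 r2(1)] layer_far_nonadj[OF a0 s'(1)] layer_far_nonadj[OF a0 r3(1)]
      layer_far_nonadj[OF s(1) r3(1)] layer_far_nonadj[OF h(1) r3(1)] by auto
  have irr: "\<not> E x x" for x using adj_irrefl .
  have dist: "a \<noteq> s" "a \<noteq> h" "a \<noteq> r2" "a \<noteq> s'" "a \<noteq> r3" "s \<noteq> r2" "s \<noteq> s'" "s \<noteq> r3"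
    "h \<noteq> r2" "h \<noteq> s'" "h \<noteq> r3" "r2 \<noteq> r3" "s' \<noteq> r3" "s \<noteq> h" "r2 \<noteq> s'"
    using layers_disjoint[OF a0 s(1)] layers_disjoint[OF a0 h(1)] layers_disjoint[OF a0 r2(1)]
      layers_disjoint[OF a0 s'(1)] layers_disjoint[OF a0 r3(1)] layers_disjoint[OF s(1) r2(1)]
      layers_disjoint[OF s(1) s'(1)] layers_disjoint[OF s(1) r3(1)] layers_disjoint[OF h(1) r2(1)]
      layers_disjoint[OF h(1) s'(1)] layers_disjoint[OF h(1) r3(1)] layers_disjoint[OF r2(1) r3(1)]
      layers_disjoint[OF s'(1) r3(1)] s(2) s'(2) by auto
  have VV: "a \<in> V" "s \<in> V" "h \<in> V" "r2 \<in> V" "s' \<in> V" "r3 \<in> V"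
    using a0 s(1) h(1) r2(1) s'(1) r3(1) layer_in_V by auto
  text \<open>\<open>s h r2 s'\<close> induces \<open>K4\<close> or a diamond, giving \<open>F2\<close> or \<open>F1\<close>.\<close>
  show ?thesis
  proof (cases "E s s'")
    case True
    have Ess: "E s s'" "E s' s" using True adj_sym by auto
    define f where "f n = (if n = 0 then s else if n = 1 then h else if n = 2 then r2 else if n = 3 then s'
      else if n = 4 then a else r3)" for n :: nat
    have V6: "F2_V = {0, 1, 2, 3, 4, 5}" unfolding F2_V_def by auto
    have "inj_on f F2_V" unfolding V6 inj_on_def f_def using dist by auto
    moreover have "f ` F2_V \<subseteq> V" unfolding V6 f_def using VV by auto
    moreover have "\<forall>u\<in>F2_V. \<forall>v\<in>F2_V. E (f u) (f v) \<longleftrightarrow> F2_E u v"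
      unfolding V6 f_def F2_E_def F2_E0_def using Es Es' N irr Ess by simp
    ultimately show ?thesis unfolding has_induced_def by blast
  next
    case False
    have Ess: "\<not> E s s'" "\<not> E s' s" using False adj_sym by auto
    define f where "f n = (if n = 1 then a else if n = 2 then s else if n = 3 then h else if n = 4 then r2
      else if n = 5 then s' else r3)" for n :: nat
    have V6: "F1_V = {1, 2, 3, 4, 5, 6}" unfolding F1_V_def by auto
    have "inj_on f F1_V" unfolding V6 inj_on_def f_def using dist by auto
    moreover have "f ` F1_V \<subseteq> V" unfolding V6 f_def using VV by auto
    moreover have "\<forall>u\<in>F1_V. \<forall>v\<in>F1_V. E (f u) (f v) \<longleftrightarrow> F1_E u v"
      unfolding V6 f_def F1_E_def F1_V_def using Es Es' N irr Ess by simp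
    ultimately show ?thesis unfolding has_induced_def by blast
  qed
qed

lemma H_of_first_wide_layer:
  assumes "\<not> thin_layer 1" "3 \<le> q" "q < D" "\<not> thin_layer q"
    and thin: "\<And>k. 2 \<le> k \<Longrightarrow> k < q \<Longrightarrow> thin_layer k"
  shows "has_induced V E (H_V (q - 2)) (H_E (q - 2))"
proof -
  define i where "i = q - 2"
  have i: "1 \<le> i" "q = i + 2" using assms(2) unfolding i_def by auto
  obtain b1 b2 where b: "b1 \<in> layer 1" "b2 \<in> layer 1" "b1 \<noteq> b2"
    using assms(1) unfolding thin_layer_def by blast
  obtain z2 z3 where z: "z2 \<in> layer q" "z3 \<in> layer q" "z2 \<noteq> z3"
    using assms(4) unfolding thin_layer_def by blast
  obtain z1 where z1: "z1 \<in> layer (Suc q)" "E z2 z1" "E z3 z1"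
    using layer_common_succ[OF z] assms(2,3) by auto
  define y where "y k = (SOME v. v \<in> layer k)" for k
  have y: "y k \<in> layer k" if "k \<le> D" for k
    using layer_nonempty[OF that] unfolding y_def by (simp add: some_in_eq)
  define f where "f u = (if u = 0 then a else if u = 1 then b1 else if u = 2 then b2
    else if u = 3 then z1 else if u = 4 then z2 else if u = 5 then z3 else y (u - 4))" for u
  have z': "z1 \<in> layer (i + 3)" "z2 \<in> layer (i + 2)" "z3 \<in> layer (i + 2)"
    using z z1(1) i(2) by (simp_all add: numeral_3_eq_3)
  have f_layer: "f u \<in> layer (H_level i u)" if u: "u \<in> H_V i" for u
  proof -
    have "6 \<le> u \<Longrightarrow> y (u - 4) \<in> layer (u - 4)" using u y assms(3) i(2) unfolding H_V_def by auto
    with nat_cases_below_6[of u] show ?thesis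
      by (elim disjE) (use layer_0 b z' in \<open>simp_all add: f_def H_level_def\<close>)
  qed
  have E_same: "E (f u) (f v)"
    if uv: "u \<in> H_V i" "v \<in> H_V i" "u \<noteq> v" "H_level i u = H_level i v" for u v
  proof -
    have "E b1 b2" "E z2 z3" using layer_clique b z assms(2,3) by auto
    moreover note adj_sym[OF this(1)] adj_sym[OF this(2)]
    ultimately show ?thesis using H_level_eq[OF uv] unfolding f_def by auto
  qed
  have E_up: "E (f u) (f v)"
    if uv: "u \<in> H_V i" "v \<in> H_V i" "H_level i v = Suc (H_level i u)" for u v
  proof -
    have fu: "f u \<in> layer (H_level i u)" using f_layer uv(1) .
    have fv: "f v \<in> layer (Suc (H_level i u))" using f_layer[OF uv(2)] uv(3) by simp
    have "H_level i v \<le> i + 3" using uv(2) unfolding H_V_def H_level_def by auto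
    then consider "H_level i u = q" | "H_level i u = 1" | "H_level i u = 0" | "2 \<le> H_level i u" "H_level i u < q"
      using uv(3) i(2) by linarith
    then show ?thesis
    proof cases
      case 1
      with H_level_top[OF uv(1,2)] uv(3) i(2) have "(u = 4 \<or> u = 5) \<and> v = 3" by simp
      with z1 show ?thesis unfolding f_def by auto
    next
      case 2
      then have "thin_layer (Suc (H_level i u))" using thin[of 2] assms(2) by (simp add: numeral_2_eq_2)
      then show ?thesis by (rule adj_of_thin_layer_above[OF fu fv])
    next
      case 3
      then have "thin_layer (H_level i u)" using thin_layer_0 by simp
      then show ?thesis by (rule adj_of_thin_layer_below[OF fu fv])
    next
      case 4
      then have "thin_layer (H_level i u)" using thin by simp
      then show ?thesis by (rule adj_of_thin_layer_below[OF fu fv])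
    qed
  qed
  have "has_induced V E (H_V i) (H_E i)"
  proof (rule has_induced_of_layer_map[OF f_layer H_E_iff_level[OF i(1)]])
    fix u v assume uv: "u \<in> H_V i" "v \<in> H_V i" "u \<noteq> v"
      and "H_level i u \<le> Suc (H_level i v)" "H_level i v \<le> Suc (H_level i u)"
    then consider "H_level i u = H_level i v" | "H_level i v = Suc (H_level i u)" | "H_level i u = Suc (H_level i v)"
      by linarith
    then show "E (f u) (f v)"
    proof cases
      case 3
      then show ?thesis using adj_sym[OF E_up[OF uv(2,1)]] by simp
    qed (use E_same[OF uv] E_up[OF uv(1,2)] in simp_all)
  qed
  then show ?thesis unfolding i_def .
qed

lemma obstruction_of_wide_end_layers:
  assumes "\<not> thin_layer 1" "\<not> thin_layer (D - 1)" "3 \<le> D"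
  shows "has_obstruction V E"
proof -
  define q where "q = (LEAST k. 2 \<le> k \<and> \<not> thin_layer k)"
  have wide: "2 \<le> D - 1 \<and> \<not> thin_layer (D - 1)" using assms(2,3) by simp
  have "2 \<le> q \<and> \<not> thin_layer q" "q \<le> D - 1"
    unfolding q_def by (rule LeastI[of "\<lambda>k. 2 \<le> k \<and> \<not> thin_layer k", OF wide],
      rule Least_le[of "\<lambda>k. 2 \<le> k \<and> \<not> thin_layer k", OF wide])
  moreover have "thin_layer k" if "2 \<le> k" "k < q" for k
    using not_less_Least[of k "\<lambda>k. 2 \<le> k \<and> \<not> thin_layer k"] that unfolding q_def by blast
  ultimately consider "q = 2" | "3 \<le> q" "q < D" "\<not> thin_layer q" "\<And>k. 2 \<le> k \<Longrightarrow> k < q \<Longrightarrow> thin_layer k"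
    using assms(3) by fastforce
  then show ?thesis
  proof cases
    case 1
    then show ?thesis using F1_or_F2_of_wide_layers_1_2 assms(1,3) \<open>2 \<le> q \<and> \<not> thin_layer q\<close>
      unfolding has_obstruction_def by auto
  next
    case 2
    then have "1 \<le> q - 2" by simp
    with H_of_first_wide_layer[OF assms(1) 2] show ?thesis unfolding has_obstruction_def by blast
  qed
qed

end

context chordal_graph
begin

lemma obstruction_of_forks:
  assumes "fork a b1 b2 t" "fork t e1 e2 a" "3 \<le> d a t"
  shows "has_obstruction V E"
proof -
  have V: "a \<in> V" "t \<in> V" "b1 \<in> V" "b2 \<in> V" "e1 \<in> V" "e2 \<in> V"
    using assms(1,2) adj_in_V unfolding fork_def by auto
  interpret geodesic_layers V E a t "d a t"
    using V by unfold_locales auto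
  have "b \<in> layer 1" if "b \<in> {b1, b2}" for b
  proof (rule in_layer_if_dist_a)
    show "d b a = 1"
      using that assms(1) dist_adj dist_commute V unfolding fork_def by auto
  qed (use that V assms(1) in \<open>auto simp: fork_def\<close>)
  moreover have "e \<in> layer (d a t - 1)" if "e \<in> {e1, e2}" for e
  proof (rule in_layer_if_dist_t)
    have "E e t" using that assms(2) adj_sym unfolding fork_def by auto
    then show "d e t = d a t - (d a t - 1)" using dist_adj assms(3) by simp
  qed (use that V assms(2) dist_t_a in \<open>auto simp: fork_def\<close>)
  ultimately have "\<not> thin_layer 1" "\<not> thin_layer (d a t - 1)"
    using assms(1,2) unfolding thin_layer_def fork_def by blast+
  then show ?thesis using obstruction_of_wide_end_layers assms(3) by blast
qed

end

theorem mainTheorem7: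
  fixes V :: "'a set" and E :: "'a \<Rightarrow> 'a \<Rightarrow> bool"
    and t1 t1' c1 c1' t2 t2' c2 c2' :: 'a
  assumes graph: "simple_graph V E"
    and conn: "connected_graph V E"
    and chord: "chordal V E"
    and D1: "induced_diamond V E t1 t1' c1 c1'"
    and D2: "induced_diamond V E t2 t2' c2 c2'"
    and i: "{c1, c1'} \<inter> {c2, c2'} = {}"
    and ii: "(\<forall>u\<in>{c1, c1'}. \<forall>v\<in>{c2, c2'}. \<not> E u v) \<longrightarrow>
             (\<forall>S. minimal_separator V E {c1, c1'} {c2, c2'} S \<longrightarrow> card S = 1)"
    and iii1: "\<not> reach_in E (V - {c1, c1'}) t1 t1'"
    and iii2: "\<not> reach_in E (V - {c2, c2'}) t2 t2'"
    and iv1: "\<forall>x \<in> V - {c1, c1'}. \<exists>y. reach_in E (V - {c1, c1'}) x y \<and> E y c1 \<and> E y c1'"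
    and iv2: "\<forall>x \<in> V - {c2, c2'}. \<exists>y. reach_in E (V - {c2, c2'}) x y \<and> E y c2 \<and> E y c2'"
  shows "has_induced V E F1_V F1_E \<or> has_induced V E F2_V F2_E \<or>
         (\<exists>i\<ge>1. has_induced V E (H_V i) (H_E i))"
proof -
  interpret chordal_graph V E
    by (rule chordal_graph.intro[OF connected_simple_graph.intro[OF graph conn]
          chordal_graph_axioms.intro[OF chord]])
  have C1: "E c1 c1'" "t1 \<in> V - {c1, c1'}" "t1' \<in> V - {c1, c1'}"
    and C2: "E c2 c2'" "t2 \<in> V - {c2, c2'}" "t2' \<in> V - {c2, c2'}"
    using D1 D2 unfolding induced_diamond_def by auto
  have "c1 \<in> V - {c2, c2'}" using D1 i unfolding induced_diamond_def by auto
  then obtain z where z: "z \<in> V - {c2, c2'}" "E z c2" "E z c2'" "\<not> reach_in E (V - {c2, c2'}) c1 z"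
    using far_common_neighbour[OF C2(2,3) iii2 iv2] by blast
  from fork_beyond_pair[OF C1(1) i C1(2,3) iii1 iv1 z]
  obtain a b1 b2 where "fork a b1 b2 z" "3 \<le> d a z"
    "\<forall>v\<in>{a, b1, b2}. v \<in> V - {c2, c2'} \<and> \<not> reach_in E (V - {c2, c2'}) v z"
    by blast
  from fork_towards_pair[OF C2(1) iv2 z(1-3) this]
  obtain t e1 e2 where "fork t e1 e2 a" "fork a b1 b2 t" "3 \<le> d a t"
    by blast
  then have "has_obstruction V E" using obstruction_of_forks by blast
  then show ?thesis unfolding has_obstruction_def .
qed

end
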